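(* The intersection $\bigcap_{e\ge 1}\hat G^{(e)}$ equals $PGL_2(F)$ (viewed inside $\mathrm{Aut}(X_{PGL_2(F)})$), and $PGL_2(F)\subseteq \hat G^{(e+1)}\subseteq\hat G^{(e)}\subseteq \mathrm{Aut}(X_{PGL_2(F)})$ for all $e\ge1$.
   Context: Let $F$ be a non-archimedean local field with ring of integers $\mathfrak{o}$, uniformizer $\varpi$, and finite residue field of cardinality $q$. $X=X_{PGL_2(F)}$ is the Bruhat–Tits tree of $PGL_2(F)$: its vertices are homothety classes $[L]$ (under $F^\times$) of $\mathfrak{o}$-lattices $L\subset F^2$, and $[L],[L']$ are joined by an edge iff there are representatives with $\varpi L\subsetneq L'\subsetneq L$; it is a $(q+1)$-regular tree. $d$ is the path-length distance on vertices; $\mathrm{Aut}(X)$ is the group of distance-preserving bijections of the vertex set, with the topology of pointwise convergence. $GL_2(F)$ acts on lattices through its linear action on $F^2$, the centre acts trivially, and this gives an embedding $PGL_2(F)\hookrightarrow\mathrm{Aut}(X)$. For an edge $\eta=\{x_1,x_2\}$ and $e\ge1$, $B(\eta,e)=\{y: \min(d(y,x_1),d(y,x_2))\le e\}$. Define $\hat G^{(e)}=\{g\in\mathrm{Aut}(X):\ \text{for every edge }\eta\ \text{there is } g'\in PGL_2(F)\text{ with } g|_{B(\eta,e)}=g'|_{B(\eta,e)}\}$. *)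

theory Defs
  imports Main
begin

text \<open>A non-archimedean local field F: a field (type 'a) with a normalised discrete
  valuation v (the value v 0 is irrelevant) which is complete and has finite residue field.\<close>

definition val_ring :: "('a::field \<Rightarrow> int) \<Rightarrow> 'a set" where
  "val_ring v = {x. x = 0 \<or> 0 \<le> v x}"

definition max_ideal :: "('a::field \<Rightarrow> int) \<Rightarrow> 'a set" where
  "max_ideal v = {x. x = 0 \<or> 1 \<le> v x}"

definition nonarch_local_field :: "('a::field \<Rightarrow> int) \<Rightarrow> bool" where
  "nonarch_local_field v \<longleftrightarrow>
     (\<forall>x y. x \<noteq> 0 \<longrightarrow> y \<noteq> 0 \<longrightarrow> v (x * y) = v x + v y) \<and>
     (\<forall>x y. x \<noteq> 0 \<longrightarrow> y \<noteq> 0 \<longrightarrow> x + y \<noteq> 0 \<longrightarrow> min (v x) (v y) \<le> v (x + y)) \<and>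
     (\<exists>p. p \<noteq> 0 \<and> v p = 1) \<and>
     (\<exists>R. finite R \<and> R \<subseteq> val_ring v \<and> (\<forall>x\<in>val_ring v. \<exists>r\<in>R. x - r \<in> max_ideal v)) \<and>
     (\<forall>s::nat \<Rightarrow> 'a.
        (\<forall>N::int. \<exists>M. \<forall>m\<ge>M. \<forall>n\<ge>M. s m - s n \<in> {x. x = 0 \<or> N \<le> v x})
        \<longrightarrow> (\<exists>l. \<forall>N::int. \<exists>M. \<forall>n\<ge>M. s n - l \<in> {x. x = 0 \<or> N \<le> v x}))"

text \<open>Vectors in F^2 and 2x2 matrices (a,b,c,d) = [[a,b],[c,d]].\<close>

type_synonym 'a vec2 = "'a \<times> 'a"
type_synonym 'a mat2 = "'a \<times> 'a \<times> 'a \<times> 'a"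

fun mat_apply :: "'a::field mat2 \<Rightarrow> 'a vec2 \<Rightarrow> 'a vec2" where
  "mat_apply (a, b, c, d) (x, y) = (a * x + b * y, c * x + d * y)"

fun mat_det :: "'a::field mat2 \<Rightarrow> 'a" where
  "mat_det (a, b, c, d) = a * d - b * c"

definition scal2 :: "'a::field \<Rightarrow> 'a vec2 \<Rightarrow> 'a vec2" where
  "scal2 c u = (c * fst u, c * snd u)"

definition is_lattice :: "('a::field \<Rightarrow> int) \<Rightarrow> 'a vec2 set \<Rightarrow> bool" where
  "is_lattice v L \<longleftrightarrow> (\<exists>u w. fst u * snd w - snd u * fst w \<noteq> 0 \<and>
      L = {(a * fst u + b * fst w, a * snd u + b * snd w) | a b. a \<in> val_ring v \<and> b \<in> val_ring v})"

definition hclass :: "'a::field vec2 set \<Rightarrow> 'a vec2 set set" where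
  "hclass L = {scal2 c ` L | c. c \<noteq> 0}"

definition vertices :: "('a::field \<Rightarrow> int) \<Rightarrow> 'a vec2 set set set" where
  "vertices v = {hclass L | L. is_lattice v L}"

definition adj :: "('a::field \<Rightarrow> int) \<Rightarrow> 'a vec2 set set \<Rightarrow> 'a vec2 set set \<Rightarrow> bool" where
  "adj v x y \<longleftrightarrow> x \<in> vertices v \<and> y \<in> vertices v \<and>
     (\<exists>L\<in>x. \<exists>L'\<in>y. \<exists>p. p \<noteq> 0 \<and> v p = 1 \<and> scal2 p ` L \<subset> L' \<and> L' \<subset> L)"

definition tdist :: "('a::field \<Rightarrow> int) \<Rightarrow> 'a vec2 set set \<Rightarrow> 'a vec2 set set \<Rightarrow> nat" where
  "tdist v x y = (LEAST n. \<exists>p::nat \<Rightarrow> 'a vec2 set set.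
       p 0 = x \<and> p n = y \<and> (\<forall>i<n. adj v (p i) (p (Suc i))))"

text \<open>Aut(X): distance-preserving bijections of the vertex set (normalised to be the
  identity off the vertex set, so that they are determined by their action on vertices).\<close>

definition tree_aut :: "('a::field \<Rightarrow> int) \<Rightarrow> ('a vec2 set set \<Rightarrow> 'a vec2 set set) set" where
  "tree_aut v = {g. bij_betw g (vertices v) (vertices v) \<and>
      (\<forall>x\<in>vertices v. \<forall>y\<in>vertices v. tdist v (g x) (g y) = tdist v x y) \<and>
      (\<forall>x. x \<notin> vertices v \<longrightarrow> g x = x)}"

definition gl_act :: "'a::field mat2 \<Rightarrow> 'a vec2 set set \<Rightarrow> 'a vec2 set set" where
  "gl_act M x = (\<lambda>L. mat_apply M ` L) ` x"

definition pgl_aut :: "('a::field \<Rightarrow> int) \<Rightarrow> 'a mat2 \<Rightarrow> ('a vec2 set set \<Rightarrow> 'a vec2 set set)" where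
  "pgl_aut v M = (\<lambda>x. if x \<in> vertices v then gl_act M x else x)"

definition PGL_in_Aut :: "('a::field \<Rightarrow> int) \<Rightarrow> ('a vec2 set set \<Rightarrow> 'a vec2 set set) set" where
  "PGL_in_Aut v = {pgl_aut v M | M. mat_det M \<noteq> 0}"

definition Ghat :: "('a::field \<Rightarrow> int) \<Rightarrow> nat \<Rightarrow> ('a vec2 set set \<Rightarrow> 'a vec2 set set) set" where
  "Ghat v e = {g \<in> tree_aut v. \<forall>x1 x2. adj v x1 x2 \<longrightarrow>
      (\<exists>g'\<in>PGL_in_Aut v. \<forall>y\<in>vertices v.
          min (tdist v y x1) (tdist v y x2) \<le> e \<longrightarrow> g y = g' y)}"

end

theory Submission
  imports Defs
begin

text \<open>
  Fix the standard vertex \<open>x\<^sub>0 = [\<o>\<^sup>2]\<close>. An automorphism \<open>g\<close> lying in every \<open>Ghat v e\<close> agrees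
  on the ball of radius \<open>e\<close> around \<open>x\<^sub>0\<close> with some matrix \<open>A\<^sub>e\<close>. A matrix fixing that ball
  pointwise stabilises \<open>\<o>\<^sup>2\<close> and the lattices \<open>\<langle>\<pi>\<^sup>e e\<^sub>1, e\<^sub>2\<rangle>\<close>, \<open>\<langle>\<pi>\<^sup>e e\<^sub>2, e\<^sub>1\<rangle>\<close>,
  \<open>\<langle>\<pi>\<^sup>e e\<^sub>1, e\<^sub>1 + e\<^sub>2\<rangle>\<close> up to homothety, which forces it to be a scalar times a matrix
  congruent to \<open>1\<close> modulo \<open>\<pi>\<^sup>e\<close>. Hence, after multiplying by \<open>A\<^sub>1\<^sup>-\<^sup>1\<close> and normalising the upper
  left entry, the \<open>A\<^sub>e\<close> form a Cauchy sequence; its limit \<open>A\<close> exists by completeness and is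
  congruent to \<open>A\<^sub>e\<close> modulo \<open>\<pi>\<^sup>e\<close>. Since every lattice is stable under a deep enough congruence
  subgroup, \<open>g\<close> and \<open>A\<^sub>1 A\<close> agree on every vertex.
\<close>


section \<open>Discrete valuations\<close>

locale discrete_valuation =
  fixes v :: "'a::field \<Rightarrow> int" and \<pi> :: 'a
  assumes val_mult: "\<And>x y. x \<noteq> 0 \<Longrightarrow> y \<noteq> 0 \<Longrightarrow> v (x * y) = v x + v y"
    and val_add: "\<And>x y. x \<noteq> 0 \<Longrightarrow> y \<noteq> 0 \<Longrightarrow> x + y \<noteq> 0 \<Longrightarrow> min (v x) (v y) \<le> v (x + y)"
    and uniformizer_nonzero: "\<pi> \<noteq> 0"
    and val_uniformizer: "v \<pi> = 1"
begin

lemma val_one [simp]: "v 1 = 0"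
  using val_mult[of 1 1] by simp

lemma val_inverse: "x \<noteq> 0 \<Longrightarrow> v (inverse x) = - v x"
  using val_mult[of x "inverse x"] by simp

lemma val_divide: "x \<noteq> 0 \<Longrightarrow> y \<noteq> 0 \<Longrightarrow> v (x / y) = v x - v y"
  by (simp add: divide_inverse val_mult val_inverse)

lemma val_minus [simp]: "v (- x) = v x"
proof (cases "x = 0")
  case False
  have "v (-1) = 0" using val_mult[of "-1" "-1"] by simp
  with False show ?thesis using val_mult[of "-1" x] by simp
qed simp

lemma val_uniformizer_power: "v (\<pi> ^ n) = int n"
  by (induction n) (auto simp: val_mult uniformizer_nonzero val_uniformizer)

text \<open>\<open>val_ge k x\<close> says \<open>x \<in> \<pi>\<^sup>k\<o>\<close>; the value \<open>v 0\<close> is never consulted.\<close>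

definition val_ge :: "int \<Rightarrow> 'a \<Rightarrow> bool" where
  "val_ge k x \<longleftrightarrow> x = 0 \<or> k \<le> v x"

lemma val_ge_zero [simp]: "val_ge k 0"
  by (simp add: val_ge_def)

lemma val_ge_one [simp]: "val_ge 0 1"
  by (simp add: val_ge_def)

lemma val_ge_minus [simp]: "val_ge k (- x) \<longleftrightarrow> val_ge k x"
  by (auto simp: val_ge_def)

lemma val_ge_diff_commute: "val_ge k (x - y) \<longleftrightarrow> val_ge k (y - x)"
  using val_ge_minus[of k "x - y"] by simp

lemma val_ge_add: "val_ge k x \<Longrightarrow> val_ge k y \<Longrightarrow> val_ge k (x + y)"
  unfolding val_ge_def using val_add[of x y] by (cases "x = 0"; cases "y = 0"; cases "x + y = 0") auto

lemma val_ge_diff: "val_ge k x \<Longrightarrow> val_ge k y \<Longrightarrow> val_ge k (x - y)"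
  using val_ge_add[of k x "- y"] by simp

lemma val_ge_mult: "val_ge k x \<Longrightarrow> val_ge l y \<Longrightarrow> val_ge (k + l) (x * y)"
  unfolding val_ge_def by (cases "x = 0"; cases "y = 0") (auto simp: val_mult)

lemma val_ge_mult_integral: "val_ge k x \<Longrightarrow> val_ge 0 y \<Longrightarrow> val_ge k (x * y)"
  using val_ge_mult[of k x 0 y] by simp

lemma val_ge_integral_mult: "val_ge 0 x \<Longrightarrow> val_ge k y \<Longrightarrow> val_ge k (x * y)"
  using val_ge_mult[of 0 x k y] by simp

lemma val_ge_mono: "val_ge k x \<Longrightarrow> l \<le> k \<Longrightarrow> val_ge l x"
  unfolding val_ge_def by auto

lemma val_ge_val: "val_ge (v x) x"
  by (simp add: val_ge_def)

lemma val_ge_uniformizer: "val_ge 1 \<pi>"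
  by (simp add: val_ge_def val_uniformizer)

lemma integral_uniformizer_power: "val_ge 0 (\<pi> ^ n)"
  by (simp add: val_ge_def val_uniformizer_power)

lemma val_ge_divide: "val_ge k x \<Longrightarrow> y \<noteq> 0 \<Longrightarrow> val_ge (k - v y) (x / y)"
  unfolding val_ge_def by (cases "x = 0") (auto simp: val_divide)

lemma val_ge_divide_uniformizer_power: "val_ge 0 (x / \<pi> ^ k) \<longleftrightarrow> val_ge (int k) x"
  unfolding val_ge_def by (cases "x = 0") (auto simp: val_divide val_uniformizer_power uniformizer_nonzero)

lemma val_ge_inverse_unit: "x \<noteq> 0 \<Longrightarrow> v x = 0 \<Longrightarrow> val_ge 0 (inverse x)"
  by (simp add: val_ge_def val_inverse)

lemma unit_iff_integral_inverse:
  "x \<noteq> 0 \<Longrightarrow> v x = 0 \<longleftrightarrow> val_ge 0 x \<and> val_ge 0 (inverse x)"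
  by (auto simp: val_ge_def val_inverse)

lemma unit_congruent_unit:
  assumes "b \<noteq> 0" "v b = 0" "val_ge 1 (a - b)"
  shows "a \<noteq> 0" "v a = 0"
proof -
  show "a \<noteq> 0" using assms unfolding val_ge_def by auto
  show "v a = 0"
  proof (cases "a = b")
    case False
    have "min (v (a - b)) (v b) \<le> v a" using val_add[of "a - b" b] False assms \<open>a \<noteq> 0\<close> by simp
    moreover have "min (v a) (v (b - a)) \<le> v b" using val_add[of a "b - a"] False assms \<open>a \<noteq> 0\<close> by simp
    moreover have "v (b - a) = v (a - b)" using val_minus[of "a - b"] by simp
    moreover have "1 \<le> v (a - b)" using assms False by (simp add: val_ge_def)
    ultimately show ?thesis using assms by linarith
  qed (use assms in simp)
qed

lemma unit_one_plus:
  assumes "1 \<le> e" "val_ge e s"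
  shows "1 + s \<noteq> 0" "val_ge 0 (inverse (1 + s))" "val_ge e (inverse (1 + s) - 1)"
proof -
  have "val_ge 1 ((1 + s) - 1)" using assms val_ge_mono by simp
  then have u: "1 + s \<noteq> 0" "v (1 + s) = 0" using unit_congruent_unit[of 1 "1 + s"] by auto
  then show "1 + s \<noteq> 0" "val_ge 0 (inverse (1 + s))" by (simp_all add: val_ge_inverse_unit)
  have "inverse (1 + s) - 1 = - (s * inverse (1 + s))" using u by (simp add: field_simps)
  then show "val_ge e (inverse (1 + s) - 1)"
    using val_ge_mult_integral[OF assms(2) \<open>val_ge 0 (inverse (1 + s))\<close>] by simp
qed

end


section \<open>Matrices, homothety classes and lattices\<close>

definition mat_one :: "'a::field mat2" where
  "mat_one = (1, 0, 0, 1)"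

definition mat_mult :: "'a::field mat2 \<Rightarrow> 'a mat2 \<Rightarrow> 'a mat2" where
  "mat_mult A B = (case A of (a, b, c, d) \<Rightarrow> case B of (a', b', c', d') \<Rightarrow>
     (a * a' + b * c', a * b' + b * d', c * a' + d * c', c * b' + d * d'))"

definition mat_scale :: "'a::field \<Rightarrow> 'a mat2 \<Rightarrow> 'a mat2" where
  "mat_scale s A = (case A of (a, b, c, d) \<Rightarrow> (s * a, s * b, s * c, s * d))"

definition mat_diff :: "'a::field mat2 \<Rightarrow> 'a mat2 \<Rightarrow> 'a mat2" where
  "mat_diff A B = (case A of (a, b, c, d) \<Rightarrow> case B of (a', b', c', d') \<Rightarrow>
     (a - a', b - b', c - c', d - d'))"

definition mat_inv :: "'a::field mat2 \<Rightarrow> 'a mat2" where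
  "mat_inv A = (case A of (a, b, c, d) \<Rightarrow> mat_scale (inverse (mat_det A)) (d, - b, - c, a))"

definition mat_normalise :: "'a::field mat2 \<Rightarrow> 'a mat2" where
  "mat_normalise A = mat_scale (inverse (fst A)) A"

lemma mat_mult_one [simp]: "mat_mult A mat_one = A"
  by (cases A) (simp add: mat_mult_def mat_one_def)

lemma mat_diff_proj:
  "mat_diff A B = (fst A - fst B, fst (snd A) - fst (snd B), fst (snd (snd A)) - fst (snd (snd B)),
                   snd (snd (snd A)) - snd (snd (snd B)))"
  by (cases A; cases B) (simp add: mat_diff_def)

lemma mat_eqI: "(\<And>x. mat_apply A x = mat_apply B x) \<Longrightarrow> A = B"
proof -
  assume h: "\<And>x. mat_apply A x = mat_apply B x"
  obtain a b c d a' b' c' d' where "A = (a, b, c, d)" "B = (a', b', c', d')" by (cases A; cases B)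
  with h[of "(1, 0)"] h[of "(0, 1)"] show "A = B" by simp
qed

lemma mat_apply_one [simp]: "mat_apply mat_one x = x"
  by (cases x) (simp add: mat_one_def)

lemma mat_apply_mult: "mat_apply (mat_mult A B) x = mat_apply A (mat_apply B x)"
  by (cases A; cases B; cases x) (simp add: mat_mult_def algebra_simps)

lemma mat_apply_scale: "mat_apply (mat_scale s A) x = scal2 s (mat_apply A x)"
  by (cases A; cases x) (simp add: mat_scale_def scal2_def algebra_simps)

lemma mat_apply_scal2: "mat_apply M (scal2 c x) = scal2 c (mat_apply M x)"
  by (cases M; cases x) (simp add: scal2_def algebra_simps)

lemma mat_det_mult: "mat_det (mat_mult A B) = mat_det A * mat_det B"
  by (cases A; cases B) (simp add: mat_mult_def algebra_simps)

lemma mat_det_scale: "mat_det (mat_scale s A) = s * s * mat_det A"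
  by (cases A) (simp add: mat_scale_def algebra_simps)

lemma mat_inv_eq_scale_adj:
  "mat_inv (a, b, c, d) = mat_scale (inverse (mat_det (a, b, c, d))) (d, - b, - c, a)"
  by (simp add: mat_inv_def)

lemma mat_det_inv: "mat_det (mat_inv A) = inverse (mat_det A)"
proof (cases A)
  fix a b c d assume A: "A = (a, b, c, d)"
  have "mat_det (d, - b, - c, a) = mat_det A" by (simp add: A algebra_simps)
  then show ?thesis
    by (cases "mat_det A = 0") (simp_all add: A mat_inv_eq_scale_adj mat_det_scale mult.commute)
qed

lemma mat_apply_inv_left: "mat_det A \<noteq> 0 \<Longrightarrow> mat_apply (mat_inv A) (mat_apply A x) = x"
proof (cases A, cases x)
  fix a b c d x1 x2 assume "mat_det A \<noteq> 0" "A = (a, b, c, d)" "x = (x1, x2)"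
  moreover have "mat_apply (d, - b, - c, a) (mat_apply A x) = scal2 (mat_det A) x"
    using calculation by (simp add: scal2_def algebra_simps)
  ultimately show ?thesis
    by (simp only: mat_inv_eq_scale_adj mat_apply_scale) (simp add: scal2_def)
qed

lemma mat_apply_inv_right: "mat_det A \<noteq> 0 \<Longrightarrow> mat_apply A (mat_apply (mat_inv A) x) = x"
proof (cases A, cases x)
  fix a b c d x1 x2 assume "mat_det A \<noteq> 0" "A = (a, b, c, d)" "x = (x1, x2)"
  moreover have "mat_apply A (mat_apply (d, - b, - c, a) x) = scal2 (mat_det A) x"
    using calculation by (simp add: scal2_def algebra_simps)
  ultimately show ?thesis
    by (simp only: mat_inv_eq_scale_adj mat_apply_scale mat_apply_scal2) (simp add: scal2_def)
qed

lemma mat_inv_mult_self: "mat_det A \<noteq> 0 \<Longrightarrow> mat_mult (mat_inv A) A = mat_one"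
  by (rule mat_eqI) (simp add: mat_apply_mult mat_apply_inv_left)

lemma mat_mult_inv_cancel: "mat_det A \<noteq> 0 \<Longrightarrow> mat_mult A (mat_mult (mat_inv A) B) = B"
  by (rule mat_eqI) (simp add: mat_apply_mult mat_apply_inv_right)

lemma mat_mult_diff: "mat_mult A (mat_diff B C) = mat_diff (mat_mult A B) (mat_mult A C)"
  by (cases A; cases B; cases C) (simp add: mat_mult_def mat_diff_def algebra_simps)

lemma inj_mat_apply: "mat_det M \<noteq> 0 \<Longrightarrow> inj (mat_apply M)"
  by (metis injI mat_apply_inv_left)

lemma scal2_image_scal2: "scal2 c ` (scal2 d ` L) = scal2 (c * d) ` L"
  by (auto simp: scal2_def image_image mult.assoc)

lemma scal2_one_image [simp]: "scal2 1 ` L = L"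
  by (simp add: scal2_def)

lemma inj_scal2: "c \<noteq> 0 \<Longrightarrow> inj (scal2 c)"
  by (auto simp: inj_def scal2_def)

lemma hclass_self: "L \<in> hclass L"
  unfolding hclass_def by (rule CollectI, rule exI[of _ 1]) simp

lemma hclass_scal2: assumes "c \<noteq> 0" shows "hclass (scal2 c ` L) = hclass L"
proof
  show "hclass (scal2 c ` L) \<subseteq> hclass L"
    unfolding hclass_def using assms by (auto simp: scal2_image_scal2)
  show "hclass L \<subseteq> hclass (scal2 c ` L)"
  proof
    fix X assume "X \<in> hclass L"
    then obtain d where d: "d \<noteq> 0" "X = scal2 d ` L" unfolding hclass_def by auto
    then have "X = scal2 (d / c) ` (scal2 c ` L)" "d / c \<noteq> 0" using assms by (simp_all add: scal2_image_scal2)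
    then show "X \<in> hclass (scal2 c ` L)" unfolding hclass_def by blast
  qed
qed

lemma hclass_eq_iff_scal2: "hclass L1 = hclass L2 \<Longrightarrow> \<exists>c. c \<noteq> 0 \<and> L1 = scal2 c ` L2"
  using hclass_self[of L1] unfolding hclass_def by auto

lemma hclass_of_member: "L' \<in> hclass L \<Longrightarrow> hclass L' = hclass L"
proof -
  assume "L' \<in> hclass L"
  then obtain c where "c \<noteq> 0" "L' = scal2 c ` L" unfolding hclass_def by auto
  then show ?thesis by (simp add: hclass_scal2)
qed

lemma gl_act_hclass: "gl_act M (hclass L) = hclass (mat_apply M ` L)"
proof -
  have "mat_apply M ` (scal2 c ` L) = scal2 c ` (mat_apply M ` L)" for c
    by (simp add: image_image mat_apply_scal2)
  then show ?thesis unfolding gl_act_def hclass_def by blast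
qed

lemma gl_act_mult: "gl_act (mat_mult A B) x = gl_act A (gl_act B x)"
  unfolding gl_act_def by (simp add: image_image mat_apply_mult)

lemma gl_act_inv_left: "mat_det A \<noteq> 0 \<Longrightarrow> gl_act (mat_inv A) (gl_act A x) = x"
  unfolding gl_act_def by (simp add: image_image mat_apply_inv_left)

lemma gl_act_inv_right: "mat_det A \<noteq> 0 \<Longrightarrow> gl_act A (gl_act (mat_inv A) x) = x"
  unfolding gl_act_def by (simp add: image_image mat_apply_inv_right)

lemma fst_mat_normalise: "fst A \<noteq> 0 \<Longrightarrow> fst (mat_normalise A) = 1"
  by (cases A) (simp add: mat_normalise_def mat_scale_def)

lemma mat_normalise_scale: "s \<noteq> 0 \<Longrightarrow> mat_normalise (mat_scale s A) = mat_normalise A"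
  by (cases A) (simp add: mat_normalise_def mat_scale_def)

lemma gl_act_mat_scale: "s \<noteq> 0 \<Longrightarrow> gl_act (mat_scale s M) (hclass L) = gl_act M (hclass L)"
proof -
  assume "s \<noteq> 0"
  moreover have "mat_apply (mat_scale s M) ` L = scal2 s ` (mat_apply M ` L)"
    by (simp add: mat_apply_scale image_image)
  ultimately show ?thesis by (simp add: gl_act_hclass hclass_scal2)
qed

definition lincomb :: "'a::field \<Rightarrow> 'a vec2 \<Rightarrow> 'a \<Rightarrow> 'a vec2 \<Rightarrow> 'a vec2" where
  "lincomb a u b w = (a * fst u + b * fst w, a * snd u + b * snd w)"

definition vec_det :: "'a::field vec2 \<Rightarrow> 'a vec2 \<Rightarrow> 'a" where
  "vec_det u w = fst u * snd w - snd u * fst w"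

lemma mat_apply_lincomb: "mat_apply M (lincomb a u b w) = lincomb a (mat_apply M u) b (mat_apply M w)"
  by (cases M; cases u; cases w) (simp add: lincomb_def algebra_simps)

lemma scal2_lincomb: "scal2 c (lincomb a u b w) = lincomb a (scal2 c u) b (scal2 c w)"
  by (simp add: lincomb_def scal2_def algebra_simps)

lemma vec_det_mat_apply: "vec_det (mat_apply M u) (mat_apply M w) = mat_det M * vec_det u w"
  by (cases M; cases u; cases w) (simp add: vec_det_def algebra_simps)

lemma lincomb_coordinates:
  assumes "vec_det u w \<noteq> 0"
  shows "x = lincomb ((fst x * snd w - snd x * fst w) / vec_det u w) u
                     ((fst u * snd x - snd u * fst x) / vec_det u w) w"
proof -
  obtain x1 x2 u1 u2 w1 w2 where xuw: "x = (x1, x2)" "u = (u1, u2)" "w = (w1, w2)"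
    by (cases x; cases u; cases w)
  have d: "u1 * w2 - u2 * w1 \<noteq> 0" using assms xuw by (simp add: vec_det_def)
  have "(x1 * w2 - x2 * w1) / (u1 * w2 - u2 * w1) * u1 + (u1 * x2 - u2 * x1) / (u1 * w2 - u2 * w1) * w1 = x1"
       "(x1 * w2 - x2 * w1) / (u1 * w2 - u2 * w1) * u2 + (u1 * x2 - u2 * x1) / (u1 * w2 - u2 * w1) * w2 = x2"
    using d by (simp_all add: divide_simps, algebra+)
  then show ?thesis by (simp add: xuw lincomb_def vec_det_def)
qed

lemma lincomb_unique:
  assumes "vec_det u w \<noteq> 0" "lincomb a u b w = lincomb a' u b' w"
  shows "a = a'" "b = b'"
proof -
  obtain u1 u2 w1 w2 where uw: "u = (u1, u2)" "w = (w1, w2)" by (cases u; cases w)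
  have h: "a * u1 + b * w1 = a' * u1 + b' * w1" "a * u2 + b * w2 = a' * u2 + b' * w2"
    using assms(2) uw by (auto simp: lincomb_def)
  have "(a - a') * vec_det u w = 0" "(b - b') * vec_det u w = 0"
    using h by (simp_all add: uw vec_det_def, algebra+)
  with assms(1) show "a = a'" "b = b'" by simp_all
qed

context discrete_valuation
begin

definition ospan :: "'a vec2 \<Rightarrow> 'a vec2 \<Rightarrow> 'a vec2 set" where
  "ospan u w = {lincomb a u b w | a b. val_ge 0 a \<and> val_ge 0 b}"

lemma is_lattice_iff_ospan: "is_lattice v L \<longleftrightarrow> (\<exists>u w. vec_det u w \<noteq> 0 \<and> L = ospan u w)"
proof -
  have "val_ring v = {x. val_ge 0 x}" by (auto simp: val_ring_def val_ge_def)
  then show ?thesis unfolding is_lattice_def ospan_def vec_det_def lincomb_def by auto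
qed

lemma lincomb_mem_ospan: "val_ge 0 a \<Longrightarrow> val_ge 0 b \<Longrightarrow> lincomb a u b w \<in> ospan u w"
  unfolding ospan_def by blast

lemma ospan_generators: "u \<in> ospan u w" "w \<in> ospan u w"
  using lincomb_mem_ospan[of 1 0 u w] lincomb_mem_ospan[of 0 1 u w] by (simp_all add: lincomb_def)

lemma ospan_lincomb_closed:
  assumes "x \<in> ospan u w" "y \<in> ospan u w" "val_ge 0 a" "val_ge 0 b"
  shows "lincomb a x b y \<in> ospan u w"
proof -
  obtain a1 b1 where x: "x = lincomb a1 u b1 w" "val_ge 0 a1" "val_ge 0 b1" using assms(1) ospan_def by auto
  obtain a2 b2 where y: "y = lincomb a2 u b2 w" "val_ge 0 a2" "val_ge 0 b2" using assms(2) ospan_def by auto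
  have "lincomb a x b y = lincomb (a * a1 + b * a2) u (a * b1 + b * b2) w"
    by (simp add: x y lincomb_def algebra_simps)
  moreover have "val_ge 0 (a * a1 + b * a2)" "val_ge 0 (a * b1 + b * b2)"
    using x y assms by (auto intro!: val_ge_add val_ge_mult_integral)
  ultimately show ?thesis using lincomb_mem_ospan by simp
qed

lemma ospan_add: "x \<in> ospan u w \<Longrightarrow> y \<in> ospan u w \<Longrightarrow> (fst x + fst y, snd x + snd y) \<in> ospan u w"
  using ospan_lincomb_closed[of x u w y 1 1] by (simp add: lincomb_def)

lemma ospan_scal2: "x \<in> ospan u w \<Longrightarrow> val_ge 0 a \<Longrightarrow> scal2 a x \<in> ospan u w"
  using ospan_lincomb_closed[of x u w x a 0] by (simp add: lincomb_def scal2_def)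

lemma ospan_subset: "u' \<in> ospan u w \<Longrightarrow> w' \<in> ospan u w \<Longrightarrow> ospan u' w' \<subseteq> ospan u w"
  using ospan_lincomb_closed unfolding ospan_def[of u' w'] by blast

lemma ospan_eqI:
  "u' \<in> ospan u w \<Longrightarrow> w' \<in> ospan u w \<Longrightarrow> u \<in> ospan u' w' \<Longrightarrow> w \<in> ospan u' w' \<Longrightarrow> ospan u' w' = ospan u w"
  using ospan_subset by blast

lemma ospan_swap: "ospan u w = ospan w u"
  by (rule ospan_eqI) (simp_all add: ospan_generators)

lemma image_ospan:
  assumes "\<And>a b. f (lincomb a u b w) = lincomb a (f u) b (f w)"
  shows "f ` ospan u w = ospan (f u) (f w)"
proof -
  have "f ` ospan u w = (\<lambda>(a, b). lincomb a (f u) b (f w)) ` {(a, b). val_ge 0 a \<and> val_ge 0 b}"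
    unfolding ospan_def by (force simp: assms[symmetric])
  also have "\<dots> = ospan (f u) (f w)" unfolding ospan_def by force
  finally show ?thesis .
qed

lemma mat_apply_ospan: "mat_apply M ` ospan u w = ospan (mat_apply M u) (mat_apply M w)"
  by (rule image_ospan) (rule mat_apply_lincomb)

lemma scal2_ospan: "scal2 c ` ospan u w = ospan (scal2 c u) (scal2 c w)"
  by (rule image_ospan) (rule scal2_lincomb)

lemma mem_ospan_iff:
  assumes "vec_det u w \<noteq> 0"
  shows "x \<in> ospan u w \<longleftrightarrow> val_ge 0 ((fst x * snd w - snd x * fst w) / vec_det u w)
                              \<and> val_ge 0 ((fst u * snd x - snd u * fst x) / vec_det u w)"
proof
  assume "x \<in> ospan u w"
  then obtain a b where "x = lincomb a u b w" "val_ge 0 a" "val_ge 0 b" unfolding ospan_def by auto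
  then show "val_ge 0 ((fst x * snd w - snd x * fst w) / vec_det u w)
           \<and> val_ge 0 ((fst u * snd x - snd u * fst x) / vec_det u w)"
    using lincomb_unique[OF assms] lincomb_coordinates[OF assms, of x] by metis
qed (use lincomb_coordinates[OF assms, of x] lincomb_mem_ospan in metis)

lemma unit_scal2_ospan: assumes "c \<noteq> 0" "v c = 0" shows "scal2 c ` ospan u w = ospan u w"
proof -
  have c: "val_ge 0 c" "val_ge 0 (inverse c)" using assms unit_iff_integral_inverse by auto
  have "u = scal2 (inverse c) (scal2 c u)" "w = scal2 (inverse c) (scal2 c w)"
    using assms by (simp_all add: scal2_def mult.assoc[symmetric])
  then have "ospan (scal2 c u) (scal2 c w) = ospan u w"
    using c by (intro ospan_eqI) (metis ospan_scal2 ospan_generators)+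
  then show ?thesis by (simp add: scal2_ospan)
qed


section \<open>The tree and the action of \<open>GL\<^sub>2(F)\<close>\<close>

lemma vertices_iff_ospan: "x \<in> vertices v \<longleftrightarrow> (\<exists>u w. vec_det u w \<noteq> 0 \<and> x = hclass (ospan u w))"
  unfolding vertices_def is_lattice_iff_ospan by blast

lemma hclass_ospan_in_vertices: "vec_det u w \<noteq> 0 \<Longrightarrow> hclass (ospan u w) \<in> vertices v"
  using vertices_iff_ospan by blast

lemma adj_sym: assumes "adj v x y" shows "adj v y x"
proof -
  have xy: "x \<in> vertices v" "y \<in> vertices v" using assms unfolding adj_def by simp_all
  obtain L L' q where h: "L \<in> x" "L' \<in> y" "q \<noteq> 0" "v q = 1" "scal2 q ` L \<subset> L'" "L' \<subset> L"
    using assms unfolding adj_def by metis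
  obtain L1 where x: "x = hclass L1" using xy(1) unfolding vertices_def by auto
  have "hclass L = x" using hclass_of_member h(1) x by blast
  then have "hclass (scal2 q ` L) = x" using hclass_scal2[OF h(3)] by simp
  then have "scal2 q ` L \<in> x" using hclass_self[of "scal2 q ` L"] by simp
  moreover have "scal2 q ` L' \<subset> scal2 q ` L"
    using h(6) inj_scal2[OF h(3)] by (metis image_mono inj_image_eq_iff psubset_eq)
  ultimately have "\<exists>L\<in>y. \<exists>L'\<in>x. \<exists>p. p \<noteq> 0 \<and> v p = 1 \<and> scal2 p ` L \<subset> L' \<and> L' \<subset> L"
    using h(2-5) by (intro bexI exI conjI)
  with xy show ?thesis unfolding adj_def by (intro conjI)
qed

text \<open>Replacing \<open>u\<close> by \<open>\<pi> u\<close> moves to a neighbour: \<open>\<pi>\<langle>u, w\<rangle> \<subset> \<langle>\<pi> u, w\<rangle> \<subset> \<langle>u, w\<rangle>\<close>.\<close>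

lemma adj_scale_generator:
  assumes "vec_det u w \<noteq> 0"
  shows "adj v (hclass (ospan u w)) (hclass (ospan (scal2 \<pi> u) w))"
proof -
  let ?L = "ospan u w" and ?L' = "ospan (scal2 \<pi> u) w"
  have d': "vec_det (scal2 \<pi> u) w \<noteq> 0"
    using assms uniformizer_nonzero by (simp add: vec_det_def scal2_def algebra_simps)
  have sL: "scal2 \<pi> ` ?L = ospan (scal2 \<pi> u) (scal2 \<pi> w)" by (rule scal2_ospan)
  have \<pi>: "val_ge 0 \<pi>" using val_ge_uniformizer val_ge_mono by auto
  have not_unit: False if "a * \<pi> = 1" "val_ge 0 a" for a
  proof -
    have "a \<noteq> 0" using that by auto
    then have "v a + 1 = 0" using that val_mult[of a \<pi>] val_uniformizer uniformizer_nonzero by simp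
    with that \<open>a \<noteq> 0\<close> show False by (simp add: val_ge_def)
  qed
  have "u \<notin> ?L'"
  proof
    assume "u \<in> ?L'"
    then obtain a b where ab: "u = lincomb a (scal2 \<pi> u) b w" "val_ge 0 a" "val_ge 0 b"
      unfolding ospan_def by auto
    have "lincomb 1 u 0 w = lincomb (a * \<pi>) u b w" using ab(1) by (simp add: lincomb_def scal2_def algebra_simps)
    then show False using lincomb_unique(1)[OF assms] not_unit ab(2) by metis
  qed
  moreover have "w \<notin> scal2 \<pi> ` ?L"
  proof
    assume "w \<in> scal2 \<pi> ` ?L"
    then have "w \<in> ospan (scal2 \<pi> u) (scal2 \<pi> w)" using sL by simp
    then obtain a b where ab: "w = lincomb a (scal2 \<pi> u) b (scal2 \<pi> w)" "val_ge 0 a" "val_ge 0 b"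
      unfolding ospan_def by blast
    have "lincomb 0 u 1 w = lincomb (a * \<pi>) u (b * \<pi>) w" using ab(1) by (simp add: lincomb_def scal2_def algebra_simps)
    then show False using lincomb_unique(2)[OF assms] not_unit ab(3) by metis
  qed
  moreover have "?L' \<subseteq> ?L" "scal2 \<pi> ` ?L \<subseteq> ?L'"
    unfolding sL by (rule ospan_subset; simp add: ospan_scal2 ospan_generators \<pi>)+
  ultimately have "scal2 \<pi> ` ?L \<subset> ?L'" "?L' \<subset> ?L" using ospan_generators by blast+
  then show ?thesis unfolding adj_def
    using hclass_self[of ?L] hclass_self[of ?L'] hclass_ospan_in_vertices[OF assms]
      hclass_ospan_in_vertices[OF d'] uniformizer_nonzero val_uniformizer by blast
qed

definition ray_lattice :: "nat \<Rightarrow> 'a vec2 \<Rightarrow> 'a vec2 \<Rightarrow> 'a vec2 set" where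
  "ray_lattice k u w = ospan (scal2 (\<pi> ^ k) u) w"

definition walk_lengths :: "'a vec2 set set \<Rightarrow> 'a vec2 set set \<Rightarrow> nat set" where
  "walk_lengths x y = {n. \<exists>P. P 0 = x \<and> P n = y \<and> (\<forall>i<n. adj v (P i) (P (Suc i)))}"

lemma tdist_walk_lengths: "tdist v x y = (LEAST n. n \<in> walk_lengths x y)"
  unfolding tdist_def walk_lengths_def by simp

lemma tdist_le_walk:
  assumes "P 0 = x" "P n = y" "\<And>i. i < n \<Longrightarrow> adj v (P i) (P (Suc i))"
  shows "tdist v x y \<le> n"
  unfolding tdist_def by (rule Least_le) (use assms in blast)

lemma tdist_self [simp]: "tdist v x x = 0"
  using tdist_le_walk[of "\<lambda>i. x" x 0 x] by simp

lemma ray_lattice_vertex: "vec_det u w \<noteq> 0 \<Longrightarrow> hclass (ray_lattice k u w) \<in> vertices v"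
  unfolding ray_lattice_def using uniformizer_nonzero
  by (intro hclass_ospan_in_vertices) (simp add: vec_det_def scal2_def algebra_simps)

lemma tdist_ray_lattice:
  assumes "vec_det u w \<noteq> 0"
  shows "tdist v (hclass (ray_lattice k u w)) (hclass (ospan u w)) \<le> k"
  unfolding ray_lattice_def
proof (rule tdist_le_walk[where P = "\<lambda>i. hclass (ospan (scal2 (\<pi> ^ (k - i)) u) w)"])
  fix i assume i: "i < k"
  have "vec_det (scal2 (\<pi> ^ (k - Suc i)) u) w \<noteq> 0"
    using assms uniformizer_nonzero by (simp add: vec_det_def scal2_def algebra_simps)
  moreover have "k - i = Suc (k - Suc i)" using i by simp
  then have "scal2 (\<pi> ^ (k - i)) u = scal2 \<pi> (scal2 (\<pi> ^ (k - Suc i)) u)"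
    by (simp add: scal2_def)
  ultimately show "adj v (hclass (ospan (scal2 (\<pi> ^ (k - i)) u) w)) (hclass (ospan (scal2 (\<pi> ^ (k - Suc i)) u) w))"
    using adj_sym[OF adj_scale_generator] by simp
qed (simp_all add: scal2_def)

lemma gl_act_vertex: assumes "mat_det M \<noteq> 0" "x \<in> vertices v" shows "gl_act M x \<in> vertices v"
proof -
  obtain u w where "vec_det u w \<noteq> 0" "x = hclass (ospan u w)" using assms(2) vertices_iff_ospan by blast
  with assms(1) show ?thesis
    by (simp add: gl_act_hclass mat_apply_ospan hclass_ospan_in_vertices vec_det_mat_apply)
qed

lemma gl_act_adj: assumes "mat_det M \<noteq> 0" "adj v x y" shows "adj v (gl_act M x) (gl_act M y)"
proof -
  obtain L L' q where h: "L \<in> x" "L' \<in> y" "q \<noteq> 0" "v q = 1" "scal2 q ` L \<subset> L'" "L' \<subset> L"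
    using assms unfolding adj_def by metis
  let ?f = "mat_apply M"
  have mem: "?f ` L \<in> gl_act M x" "?f ` L' \<in> gl_act M y" using h(1,2) unfolding gl_act_def by blast+
  have "scal2 q ` (?f ` L) = ?f ` (scal2 q ` L)"
    by (simp add: image_image mat_apply_scal2)
  then have sub: "scal2 q ` (?f ` L) \<subset> ?f ` L'" "?f ` L' \<subset> ?f ` L"
    using h(5,6) inj_mat_apply[OF assms(1)]
    by (simp_all add: inj_image_subset_iff psubset_eq inj_image_eq_iff)
  have "gl_act M x \<in> vertices v" "gl_act M y \<in> vertices v"
    using assms gl_act_vertex unfolding adj_def by simp_all
  moreover have "\<exists>L\<in>gl_act M x. \<exists>L'\<in>gl_act M y. \<exists>p. p \<noteq> 0 \<and> v p = 1 \<and> scal2 p ` L \<subset> L' \<and> L' \<subset> L"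
    using mem sub h(3,4) by (intro bexI exI conjI)
  ultimately show ?thesis unfolding adj_def by (intro conjI)
qed

lemma walk_lengths_map:
  assumes "\<And>a b. adj v a b \<Longrightarrow> adj v (f a) (f b)" "n \<in> walk_lengths x y"
  shows "n \<in> walk_lengths (f x) (f y)"
proof -
  obtain P where "P 0 = x" "P n = y" "\<forall>i<n. adj v (P i) (P (Suc i))"
    using assms(2) walk_lengths_def by auto
  then show ?thesis unfolding walk_lengths_def using assms(1) by (intro CollectI exI[of _ "f \<circ> P"]) auto
qed

lemma tdist_gl_act: assumes "mat_det M \<noteq> 0" shows "tdist v (gl_act M x) (gl_act M y) = tdist v x y"
proof -
  have "walk_lengths (gl_act M x) (gl_act M y) = walk_lengths x y"
  proof
    show "walk_lengths x y \<subseteq> walk_lengths (gl_act M x) (gl_act M y)"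
      using walk_lengths_map[of "gl_act M"] gl_act_adj[OF assms] by blast
    have "mat_det (mat_inv M) \<noteq> 0" using assms by (simp add: mat_det_inv)
    then show "walk_lengths (gl_act M x) (gl_act M y) \<subseteq> walk_lengths x y"
      using walk_lengths_map[of "gl_act (mat_inv M)" _ "gl_act M x" "gl_act M y"] gl_act_adj
      by (simp add: gl_act_inv_left[OF assms] subset_iff)
  qed
  then show ?thesis by (simp add: tdist_walk_lengths)
qed

lemma pgl_aut_in_tree_aut: assumes "mat_det M \<noteq> 0" shows "pgl_aut v M \<in> tree_aut v"
proof -
  have d: "mat_det (mat_inv M) \<noteq> 0" using assms by (simp add: mat_det_inv)
  have "bij_betw (pgl_aut v M) (vertices v) (vertices v)"
  proof (rule bij_betw_byWitness[where f' = "gl_act (mat_inv M)"])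
    show "\<forall>a\<in>vertices v. gl_act (mat_inv M) (pgl_aut v M a) = a"
      by (simp add: pgl_aut_def gl_act_inv_left[OF assms])
    show "\<forall>a\<in>vertices v. pgl_aut v M (gl_act (mat_inv M) a) = a"
      by (simp add: pgl_aut_def gl_act_inv_right[OF assms] gl_act_vertex[OF d])
    show "pgl_aut v M ` vertices v \<subseteq> vertices v" "gl_act (mat_inv M) ` vertices v \<subseteq> vertices v"
      by (auto simp: pgl_aut_def gl_act_vertex[OF assms] gl_act_vertex[OF d])
  qed
  then show ?thesis unfolding tree_aut_def using tdist_gl_act[OF assms] by (auto simp: pgl_aut_def)
qed

lemma PGL_in_Aut_subset_tree_aut: "PGL_in_Aut v \<subseteq> tree_aut v"
  unfolding PGL_in_Aut_def using pgl_aut_in_tree_aut by blast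

lemma PGL_in_Aut_subset_Ghat: "PGL_in_Aut v \<subseteq> Ghat v e"
  unfolding Ghat_def using PGL_in_Aut_subset_tree_aut by blast


section \<open>Congruence subgroups and stabilisers of balls\<close>

definition mat_ge :: "int \<Rightarrow> 'a mat2 \<Rightarrow> bool" where
  "mat_ge k M \<longleftrightarrow> val_ge k (fst M) \<and> val_ge k (fst (snd M)) \<and> val_ge k (fst (snd (snd M)))
                  \<and> val_ge k (snd (snd (snd M)))"

definition cong_id :: "int \<Rightarrow> 'a mat2 \<Rightarrow> bool" where
  "cong_id e T \<longleftrightarrow> mat_ge e (mat_diff T mat_one)"

lemma mat_ge_simp [simp]: "mat_ge k (a, b, c, d) \<longleftrightarrow> val_ge k a \<and> val_ge k b \<and> val_ge k c \<and> val_ge k d"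
  by (simp add: mat_ge_def)

lemma cong_id_simp [simp]:
  "cong_id e (a, b, c, d) \<longleftrightarrow> val_ge e (a - 1) \<and> val_ge e b \<and> val_ge e c \<and> val_ge e (d - 1)"
  by (simp add: cong_id_def mat_diff_def mat_one_def)

lemma mat_ge_mult: "mat_ge k A \<Longrightarrow> mat_ge l B \<Longrightarrow> mat_ge (k + l) (mat_mult A B)"
  by (cases A; cases B) (auto simp: mat_mult_def intro!: val_ge_add val_ge_mult)

lemma mat_ge_integral_mult: "mat_ge 0 A \<Longrightarrow> mat_ge k B \<Longrightarrow> mat_ge k (mat_mult A B)"
  using mat_ge_mult[of 0 A k B] by simp

lemma mat_ge_det: "mat_ge 0 M \<Longrightarrow> val_ge 0 (mat_det M)"
  by (cases M) (auto intro!: val_ge_diff val_ge_integral_mult)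

lemma cong_id_integral: "cong_id e T \<Longrightarrow> 0 \<le> e \<Longrightarrow> mat_ge 0 T"
proof (cases T)
  fix a b c d assume "cong_id e T" "0 \<le> e" "T = (a, b, c, d)"
  then have "val_ge 0 (a - 1)" "val_ge 0 b" "val_ge 0 c" "val_ge 0 (d - 1)"
    by (auto intro: val_ge_mono)
  then show ?thesis using \<open>T = (a, b, c, d)\<close> val_ge_add[of 0 "a - 1" 1] val_ge_add[of 0 "d - 1" 1] by simp
qed

lemma cong_id_det:
  assumes "cong_id e T" "1 \<le> e"
  shows "mat_det T \<noteq> 0" "v (mat_det T) = 0"
proof -
  obtain a b c d where T: "T = (a, b, c, d)" by (cases T)
  have "mat_det T - 1 = (a - 1) * (d - 1) + (a - 1) + (d - 1) - b * c"
    by (simp add: T algebra_simps)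
  moreover have "val_ge e (a - 1)" "val_ge e b" "val_ge e c" "val_ge e (d - 1)"
    using assms(1) by (simp_all add: T)
  moreover have "val_ge e ((a - 1) * (d - 1))" "val_ge e (b * c)"
    using calculation(2-5) val_ge_mult[of e "a - 1" e "d - 1"] val_ge_mult[of e b e c] assms(2)
    by (auto elim: val_ge_mono)
  ultimately have "val_ge e (mat_det T - 1)"
    by (metis val_ge_add val_ge_diff)
  then have "val_ge 1 (mat_det T - 1)" using assms(2) by (rule val_ge_mono)
  then show "mat_det T \<noteq> 0" "v (mat_det T) = 0" using unit_congruent_unit[of 1 "mat_det T"] by auto
qed

lemma mat_inv_integral:
  assumes "mat_ge 0 T" "mat_det T \<noteq> 0" "v (mat_det T) = 0"
  shows "mat_ge 0 (mat_inv T)"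
proof (cases T)
  fix a b c d assume T: "T = (a, b, c, d)"
  have "val_ge 0 (inverse (mat_det T))" using assms(2,3) by (rule val_ge_inverse_unit)
  then show ?thesis using assms(1) by (simp add: T mat_inv_def mat_scale_def val_ge_integral_mult)
qed

lemma cong_id_mat_inv: assumes "cong_id e T" "1 \<le> e" shows "cong_id e (mat_inv T)"
proof -
  have d: "mat_det T \<noteq> 0" "v (mat_det T) = 0" using cong_id_det[OF assms] by auto
  have "mat_ge 0 (mat_inv T)" using mat_inv_integral[OF cong_id_integral d] assms by simp
  moreover have "mat_ge e (mat_diff mat_one T)"
    using assms(1) by (cases T) (simp add: mat_diff_def mat_one_def val_ge_diff_commute[of _ 1])
  moreover have "mat_diff (mat_inv T) mat_one = mat_mult (mat_inv T) (mat_diff mat_one T)"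
    by (simp add: mat_mult_diff mat_inv_mult_self d)
  ultimately show ?thesis unfolding cong_id_def by (simp add: mat_ge_integral_mult)
qed

definition std_lattice :: "'a vec2 set" where
  "std_lattice = ospan (1, 0) (0, 1)"

definition std_vertex :: "'a vec2 set set" where
  "std_vertex = hclass std_lattice"

lemma mem_std_lattice: "x \<in> std_lattice \<longleftrightarrow> val_ge 0 (fst x) \<and> val_ge 0 (snd x)"
  unfolding std_lattice_def by (subst mem_ospan_iff) (simp_all add: vec_det_def)

lemma std_lattice_alt: "ospan (0, 1) (1, 0) = std_lattice" "ospan (1, 0) (1, 1) = std_lattice"
  unfolding std_lattice_def
  by (rule ospan_swap[symmetric]) (rule ospan_eqI; simp add: ospan_generators mem_ospan_iff vec_det_def)

lemma std_vertex_in_vertices: "std_vertex \<in> vertices v"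
  unfolding std_vertex_def std_lattice_def by (rule hclass_ospan_in_vertices) (simp add: vec_det_def)

lemma mem_ray_lattice:
  "x \<in> ray_lattice k (1, 0) (0, 1) \<longleftrightarrow> val_ge (int k) (fst x) \<and> val_ge 0 (snd x)"
  "x \<in> ray_lattice k (0, 1) (1, 0) \<longleftrightarrow> val_ge 0 (fst x) \<and> val_ge (int k) (snd x)"
  "x \<in> ray_lattice k (1, 0) (1, 1) \<longleftrightarrow> val_ge (int k) (fst x - snd x) \<and> val_ge 0 (snd x)"
proof -
  have \<pi>: "\<pi> ^ k \<noteq> 0" using uniformizer_nonzero by simp
  show "x \<in> ray_lattice k (1, 0) (0, 1) \<longleftrightarrow> val_ge (int k) (fst x) \<and> val_ge 0 (snd x)"
    unfolding ray_lattice_def using \<pi>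
    by (subst mem_ospan_iff) (simp_all add: vec_det_def scal2_def val_ge_divide_uniformizer_power)
  have "x \<in> ray_lattice k (0, 1) (1, 0) \<longleftrightarrow> val_ge 0 (- (snd x / \<pi> ^ k)) \<and> val_ge 0 (fst x)"
    unfolding ray_lattice_def using \<pi> by (subst mem_ospan_iff) (simp_all add: vec_det_def scal2_def)
  then show "x \<in> ray_lattice k (0, 1) (1, 0) \<longleftrightarrow> val_ge 0 (fst x) \<and> val_ge (int k) (snd x)"
    by (simp only: val_ge_minus val_ge_divide_uniformizer_power) blast
  have "x \<in> ray_lattice k (1, 0) (1, 1) \<longleftrightarrow> val_ge 0 ((fst x - snd x) / \<pi> ^ k) \<and> val_ge 0 (snd x)"
    unfolding ray_lattice_def using \<pi>
    by (subst mem_ospan_iff) (simp_all add: vec_det_def scal2_def diff_divide_distrib)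
  then show "x \<in> ray_lattice k (1, 0) (1, 1) \<longleftrightarrow> val_ge (int k) (fst x - snd x) \<and> val_ge 0 (snd x)"
    by (simp only: val_ge_divide_uniformizer_power)
qed

lemma mat_ge_zero_iff_maps_std_lattice:
  "mat_ge 0 M \<longleftrightarrow> mat_apply M ` std_lattice \<subseteq> std_lattice"
proof
  assume "mat_ge 0 M"
  then show "mat_apply M ` std_lattice \<subseteq> std_lattice"
    by (cases M) (auto simp: mem_std_lattice intro!: val_ge_add val_ge_integral_mult)
next
  assume "mat_apply M ` std_lattice \<subseteq> std_lattice"
  moreover have "(1, 0) \<in> std_lattice" "(0, 1) \<in> std_lattice" by (simp_all add: mem_std_lattice)
  ultimately have "mat_apply M (1, 0) \<in> std_lattice" "mat_apply M (0, 1) \<in> std_lattice" by blast+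
  then show "mat_ge 0 M" by (cases M) (simp add: mem_std_lattice)
qed

lemma std_lattice_stabiliser:
  assumes "mat_apply N ` std_lattice = std_lattice" "mat_det N \<noteq> 0"
  shows "mat_ge 0 N" "v (mat_det N) = 0"
proof -
  show "mat_ge 0 N" using assms(1) mat_ge_zero_iff_maps_std_lattice by simp
  have "mat_apply (mat_inv N) ` std_lattice = mat_apply (mat_inv N) ` mat_apply N ` std_lattice"
    using assms(1) by simp
  also have "\<dots> = std_lattice" by (simp add: image_image mat_apply_inv_left assms(2))
  finally have "mat_ge 0 (mat_inv N)" using mat_ge_zero_iff_maps_std_lattice by simp
  then have "val_ge 0 (mat_det N)" "val_ge 0 (inverse (mat_det N))"
    using \<open>mat_ge 0 N\<close> mat_ge_det mat_det_inv by metis+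
  then show "v (mat_det N) = 0" using unit_iff_integral_inverse[OF assms(2)] by simp
qed

text \<open>\<open>N T = \<kappa> T\<close> forces \<open>\<kappa>\<close> to be a unit, because both \<open>\<kappa> z\<close> and \<open>\<kappa>\<^sup>-\<^sup>1 z\<close> lie in
  \<open>std_lattice\<close> while \<open>z\<close> is primitive there.\<close>

lemma stable_sublattice:
  assumes N: "mat_apply N ` std_lattice = std_lattice" "mat_det N \<noteq> 0"
    and T: "T = ospan u w" "T \<subseteq> std_lattice" "z \<in> T"
    and primitive: "\<And>c. scal2 c z \<in> std_lattice \<Longrightarrow> val_ge 0 c"
    and fixed: "gl_act N (hclass T) = hclass T"
  shows "mat_apply N ` T = T"
proof -
  obtain \<kappa> where \<kappa>: "\<kappa> \<noteq> 0" "mat_apply N ` T = scal2 \<kappa> ` T"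
    using hclass_eq_iff_scal2 fixed by (metis gl_act_hclass)
  have "scal2 \<kappa> z \<in> std_lattice" using T \<kappa>(2) N(1) by blast
  then have "val_ge 0 \<kappa>" using primitive by blast
  obtain t where t: "t \<in> T" "mat_apply N z = scal2 \<kappa> t" using T(3) \<kappa>(2) by blast
  then obtain s where s: "s \<in> std_lattice" "t = mat_apply N s" using T(2) N(1) by blast
  have "mat_apply N (scal2 (inverse \<kappa>) z) = scal2 (inverse \<kappa>) (scal2 \<kappa> t)"
    by (simp add: mat_apply_scal2 t(2))
  also have "\<dots> = mat_apply N s" using \<kappa>(1) s(2) by (simp add: scal2_def mult.assoc[symmetric])
  finally have "mat_apply N (scal2 (inverse \<kappa>) z) = mat_apply N s" .
  then have "scal2 (inverse \<kappa>) z = s" using inj_mat_apply[OF N(2)] by (simp add: inj_eq)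
  then have "val_ge 0 (inverse \<kappa>)" using primitive s(1) by blast
  with \<open>val_ge 0 \<kappa>\<close> \<kappa>(1) have "v \<kappa> = 0" using unit_iff_integral_inverse by blast
  then show ?thesis using \<kappa> unit_scal2_ospan T(1) by simp
qed

lemma scaled_cong_id_of_entries:
  assumes "mat_ge 0 (a, b, c, d)" "mat_det (a, b, c, d) \<noteq> 0" "v (mat_det (a, b, c, d)) = 0"
    and "1 \<le> k" "val_ge k b" "val_ge k c" "val_ge k (d - a)"
  shows "\<exists>\<mu> T. \<mu> \<noteq> 0 \<and> cong_id k T \<and> (a, b, c, d) = mat_scale \<mu> T"
proof -
  have "val_ge (k + k) (b * c)" using assms(5,6) by (rule val_ge_mult)
  then have "val_ge 1 (a * d - mat_det (a, b, c, d))" using assms(4) by (simp add: val_ge_mono)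
  then have "a * d \<noteq> 0" "v (a * d) = 0" using unit_congruent_unit assms(2,3) by blast+
  then have a: "a \<noteq> 0" "val_ge 0 (inverse a)"
    using assms(1) val_mult[of a d] by (auto simp: val_ge_def val_inverse)
  have "d / a - 1 = (d - a) * inverse a" using a by (simp add: field_simps)
  then have "cong_id k (1, b / a, c / a, d / a)"
    using a assms(5-7) by (simp add: divide_inverse val_ge_mult_integral)
  moreover have "(a, b, c, d) = mat_scale a (1, b / a, c / a, d / a)" using a by (simp add: mat_scale_def)
  ultimately show ?thesis using a by blast
qed

lemma std_lattice_and_rays_stabiliser:
  assumes N: "mat_apply N ` std_lattice = std_lattice" "mat_det N \<noteq> 0" and k: "1 \<le> k"
    and fixes_rays: "\<And>u w. ospan u w = std_lattice \<Longrightarrow> vec_det u w \<noteq> 0 \<Longrightarrow>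
                       gl_act N (hclass (ray_lattice k u w)) = hclass (ray_lattice k u w)"
  shows "\<exists>\<mu> T. \<mu> \<noteq> 0 \<and> cong_id (int k) T \<and> N = mat_scale \<mu> T"
proof -
  have ray_sub: "ray_lattice k u w \<subseteq> std_lattice" if "ospan u w = std_lattice" for u w
    unfolding ray_lattice_def that[symmetric]
    by (intro ospan_subset) (simp_all add: ospan_generators ospan_scal2 integral_uniformizer_power)
  have ray_stable: "mat_apply N z \<in> ray_lattice k u w"
    if "ospan u w = std_lattice" "vec_det u w \<noteq> 0" "z \<in> ray_lattice k u w"
       "\<And>c. scal2 c z \<in> std_lattice \<Longrightarrow> val_ge 0 c" for u w z
    using stable_sublattice[OF N ray_lattice_def ray_sub[OF that(1)] that(3,4) fixes_rays[OF that(1,2)]]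
      that(3) by blast
  have "mat_apply N (0, 1) \<in> ray_lattice k (1, 0) (0, 1)" "mat_apply N (1, 0) \<in> ray_lattice k (0, 1) (1, 0)"
    "mat_apply N (1, 1) \<in> ray_lattice k (1, 0) (1, 1)"
    by (rule ray_stable; simp add: std_lattice_def[symmetric] std_lattice_alt vec_det_def
        mem_ray_lattice mem_std_lattice scal2_def)+
  moreover obtain a b c d where abcd: "N = (a, b, c, d)" by (cases N)
  ultimately have b: "val_ge (int k) b" and c: "val_ge (int k) c" and "val_ge (int k) (a + b - (c + d))"
    by (simp_all add: mem_ray_lattice)
  moreover have "d - a = b - c - (a + b - (c + d))" by (simp add: algebra_simps)
  ultimately have "val_ge (int k) (d - a)" by (metis val_ge_diff)
  moreover have "mat_ge 0 (a, b, c, d)" "v (mat_det (a, b, c, d)) = 0" "mat_det (a, b, c, d) \<noteq> 0"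
    using std_lattice_stabiliser[OF N] N(2) abcd by simp_all
  ultimately show ?thesis using scaled_cong_id_of_entries[of a b c d "int k"] abcd k b c by simp
qed

lemma ball_stabiliser_cong_id:
  assumes N: "mat_det N \<noteq> 0" and k: "1 \<le> k"
    and fixes_ball: "\<And>y. y \<in> vertices v \<Longrightarrow> tdist v y std_vertex \<le> k \<Longrightarrow> gl_act N y = y"
  shows "\<exists>\<mu> T. \<mu> \<noteq> 0 \<and> cong_id (int k) T \<and> N = mat_scale \<mu> T"
proof -
  obtain c0 where c0: "c0 \<noteq> 0" "mat_apply N ` std_lattice = scal2 c0 ` std_lattice"
    using fixes_ball[OF std_vertex_in_vertices] hclass_eq_iff_scal2
    by (metis std_vertex_def gl_act_hclass tdist_self zero_le)
  define N0 where "N0 = mat_scale (inverse c0) N"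
  have "mat_apply N0 ` std_lattice = scal2 (inverse c0) ` mat_apply N ` std_lattice"
    by (simp add: N0_def mat_apply_scale image_image)
  then have N0: "mat_apply N0 ` std_lattice = std_lattice" "mat_det N0 \<noteq> 0"
    using c0 N by (simp_all add: N0_def mat_det_scale scal2_image_scal2)
  have "gl_act N0 (hclass (ray_lattice k u w)) = hclass (ray_lattice k u w)"
    if "ospan u w = std_lattice" "vec_det u w \<noteq> 0" for u w
    using fixes_ball[OF ray_lattice_vertex[OF that(2)]] tdist_ray_lattice[OF that(2), of k] that(1) c0(1)
    by (simp add: N0_def gl_act_mat_scale std_vertex_def)
  then obtain \<mu> T where "\<mu> \<noteq> 0" "cong_id (int k) T" "N0 = mat_scale \<mu> T"
    using std_lattice_and_rays_stabiliser[OF N0 k] by blast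
  moreover have "N = mat_scale c0 N0" using c0(1) by (cases N) (simp add: N0_def mat_scale_def)
  ultimately show ?thesis using c0(1)
    by (intro exI[of _ "c0 * \<mu>"] exI[of _ T]) (cases T, simp add: mat_scale_def)
qed

lemma ospan_contains_small_vectors:
  assumes "vec_det u w \<noteq> 0"
  shows "\<exists>K. \<forall>z. val_ge K (fst z) \<and> val_ge K (snd z) \<longrightarrow> z \<in> ospan u w"
proof -
  define K where "K = \<bar>v (fst u)\<bar> + \<bar>v (snd u)\<bar> + \<bar>v (fst w)\<bar> + \<bar>v (snd w)\<bar> + \<bar>v (vec_det u w)\<bar>"
  have bound: "val_ge (v (vec_det u w) - K) y" if "y \<in> {fst u, snd u, fst w, snd w}" for y
    using that val_ge_val[of y] unfolding K_def by (auto elim!: val_ge_mono)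
  have "z \<in> ospan u w" if z: "val_ge K (fst z)" "val_ge K (snd z)" for z
  proof -
    have "val_ge (v (vec_det u w)) (fst z * snd w - snd z * fst w)"
         "val_ge (v (vec_det u w)) (fst u * snd z - snd u * fst z)"
      using val_ge_mult[OF z(1) bound[of "snd w"]] val_ge_mult[OF z(2) bound[of "fst w"]]
        val_ge_mult[OF bound[of "fst u"] z(2)] val_ge_mult[OF bound[of "snd u"] z(1)]
      by (auto intro!: val_ge_diff)
    then show ?thesis
      using val_ge_divide[OF _ assms] by (metis diff_self mem_ospan_iff[OF assms])
  qed
  then show ?thesis by blast
qed

lemma ospan_bounded: "\<exists>K. \<forall>x\<in>ospan u w. val_ge (- K) (fst x) \<and> val_ge (- K) (snd x)"
proof -
  define K where "K = \<bar>v (fst u)\<bar> + \<bar>v (snd u)\<bar> + \<bar>v (fst w)\<bar> + \<bar>v (snd w)\<bar>"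
  have bound: "val_ge (- K) y" if "y \<in> {fst u, snd u, fst w, snd w}" for y
    using that val_ge_val[of y] unfolding K_def by (auto elim!: val_ge_mono)
  have "val_ge (- K) (fst x) \<and> val_ge (- K) (snd x)" if x: "x \<in> ospan u w" for x
  proof -
    obtain a b where "x = lincomb a u b w" "val_ge 0 a" "val_ge 0 b" using x unfolding ospan_def by auto
    then show ?thesis unfolding lincomb_def
      using val_ge_integral_mult bound by (simp add: val_ge_add)
  qed
  then show ?thesis by blast
qed

lemma cong_id_apply:
  assumes "cong_id e T" "val_ge k (fst x)" "val_ge k (snd x)"
  shows "\<exists>y. val_ge (e + k) (fst y) \<and> val_ge (e + k) (snd y) \<and> mat_apply T x = (fst x + fst y, snd x + snd y)"
proof (cases T)
  fix a b c d assume T: "T = (a, b, c, d)"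
  let ?y = "((a - 1) * fst x + b * snd x, c * fst x + (d - 1) * snd x)"
  have "val_ge e (a - 1)" "val_ge e b" "val_ge e c" "val_ge e (d - 1)" using assms(1) by (simp_all add: T)
  then have "val_ge (e + k) (fst ?y)" "val_ge (e + k) (snd ?y)"
    using assms(2,3) by (simp_all add: val_ge_add val_ge_mult)
  moreover have "mat_apply T x = (fst x + fst ?y, snd x + snd ?y)"
    by (cases x) (simp add: T algebra_simps)
  ultimately show ?thesis by blast
qed

lemma cong_id_maps_ospan_into:
  assumes "vec_det u w \<noteq> 0"
  shows "\<exists>m. \<forall>e\<ge>m. \<forall>T. cong_id e T \<longrightarrow> mat_apply T ` ospan u w \<subseteq> ospan u w"
proof -
  obtain K where K: "\<And>z. val_ge K (fst z) \<Longrightarrow> val_ge K (snd z) \<Longrightarrow> z \<in> ospan u w"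
    using ospan_contains_small_vectors[OF assms] by blast
  obtain K' where K': "\<And>x. x \<in> ospan u w \<Longrightarrow> val_ge (- K') (fst x) \<and> val_ge (- K') (snd x)"
    using ospan_bounded by blast
  have "mat_apply T x \<in> ospan u w" if e: "K + K' \<le> e" and T: "cong_id e T" and x: "x \<in> ospan u w"
    for e T x
  proof -
    obtain y where y: "val_ge (e - K') (fst y)" "val_ge (e - K') (snd y)"
      "mat_apply T x = (fst x + fst y, snd x + snd y)"
      using cong_id_apply[OF T] K'[OF x] by fastforce
    have "K \<le> e - K'" using e by simp
    then have "y \<in> ospan u w" using K y(1,2) val_ge_mono by blast
    then show ?thesis using y(3) ospan_add[OF x] by simp
  qed
  then show ?thesis by blast
qed

lemma cong_id_stabilises_ospan:
  assumes "vec_det u w \<noteq> 0"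
  shows "\<exists>m. \<forall>e\<ge>m. \<forall>T. cong_id (int e) T \<longrightarrow> mat_apply T ` ospan u w = ospan u w"
proof -
  obtain m where m: "\<And>e T. m \<le> e \<Longrightarrow> cong_id e T \<Longrightarrow> mat_apply T ` ospan u w \<subseteq> ospan u w"
    using cong_id_maps_ospan_into[OF assms] by blast
  have "mat_apply T ` ospan u w = ospan u w" if e: "max m 1 \<le> int e" and T: "cong_id (int e) T" for e T
  proof
    show "mat_apply T ` ospan u w \<subseteq> ospan u w" using m[of "int e"] e T by simp
    have inv: "mat_apply (mat_inv T) ` ospan u w \<subseteq> ospan u w"
      using m[of "int e"] cong_id_mat_inv[OF T] e by simp
    have "mat_det T \<noteq> 0" using cong_id_det T e by simp
    then have "x = mat_apply T (mat_apply (mat_inv T) x)" for x by (simp add: mat_apply_inv_right)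
    with inv show "ospan u w \<subseteq> mat_apply T ` ospan u w" by blast
  qed
  moreover have "max m 1 \<le> int e" if "nat (max m 1) \<le> e" for e using that by linarith
  ultimately show ?thesis by blast
qed

lemma cong_id_inv_mult_of_close:
  assumes "cong_id 1 A" "mat_ge e (mat_diff B A)"
  shows "cong_id e (mat_mult (mat_inv A) B)"
proof -
  have "mat_det A \<noteq> 0" using cong_id_det[OF assms(1)] by simp
  then have "mat_diff (mat_mult (mat_inv A) B) mat_one = mat_mult (mat_inv A) (mat_diff B A)"
    by (simp add: mat_mult_diff mat_inv_mult_self)
  moreover have "mat_ge 0 (mat_inv A)"
    using cong_id_integral[OF cong_id_mat_inv[OF assms(1)]] by simp
  ultimately show ?thesis unfolding cong_id_def using assms(2) by (simp add: mat_ge_integral_mult)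
qed

lemma cong_id_normalise:
  assumes "cong_id e T" "1 \<le> e"
  shows "fst T \<noteq> 0" "cong_id e (mat_normalise T)"
proof -
  obtain a b c d where T: "T = (a, b, c, d)" by (cases T)
  have "val_ge e (a - 1)" "val_ge e b" "val_ge e c" "val_ge e (d - 1)" using assms(1) by (simp_all add: T)
  then have i: "a \<noteq> 0" "val_ge 0 (inverse a)" "val_ge e (inverse a - 1)"
    using unit_one_plus[OF assms(2), of "a - 1"] by simp_all
  then show "fst T \<noteq> 0" by (simp add: T)
  have "val_ge e (inverse a * (d - 1) + (inverse a - 1))"
    using i \<open>val_ge e (d - 1)\<close> by (intro val_ge_add val_ge_integral_mult)
  moreover have "inverse a * d - 1 = inverse a * (d - 1) + (inverse a - 1)" by (simp add: algebra_simps)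
  ultimately have "val_ge e (inverse a * d - 1)" by (simp only:)
  then show "cong_id e (mat_normalise T)"
    using i \<open>val_ge e b\<close> \<open>val_ge e c\<close> by (simp add: T mat_normalise_def mat_scale_def val_ge_integral_mult)
qed

text \<open>The key estimate for the Cauchy property: two normalised representatives that differ by a
  scalar times an element of the \<open>e\<close>-th congruence subgroup are congruent modulo \<open>\<pi>\<^sup>e\<close>;
  the normalisation \<open>G\<^sub>1\<^sub>1 = 1\<close> pins the scalar down to \<open>1\<close> modulo \<open>\<pi>\<^sup>e\<close>.\<close>

lemma normalised_rescaled_close:
  assumes "fst G = 1" "fst G' = 1" "mat_ge 0 G" "cong_id e T" "1 \<le> e"
    and G': "G' = mat_scale \<mu> (mat_mult G T)"
  shows "mat_ge e (mat_diff G' G)"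
proof -
  define H where "H = mat_mult G T"
  have G'H: "G' = mat_scale \<mu> H" using G' H_def by simp
  have "mat_diff H G = mat_mult G (mat_diff T mat_one)" by (simp add: H_def mat_mult_diff)
  then have HG: "mat_ge e (mat_diff H G)" using assms(3,4) by (simp add: cong_id_def mat_ge_integral_mult)
  obtain h1 h2 h3 h4 g2 g3 g4 where HG_eq: "H = (h1, h2, h3, h4)" "G = (1, g2, g3, g4)"
    using assms(1) by (cases H; cases G) auto
  then have "val_ge e (h1 - 1)" using HG by (simp add: mat_diff_def)
  then have \<mu>: "val_ge 0 (inverse (1 + (h1 - 1)))" "val_ge e (inverse (1 + (h1 - 1)) - 1)"
    using unit_one_plus[OF assms(5)] by blast+
  have "\<mu> * h1 = 1" using assms(2) G'H by (simp add: HG_eq mat_scale_def)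
  then have "\<mu> = inverse (1 + (h1 - 1))" using inverse_unique[of h1 \<mu>] by (simp add: mult.commute)
  then have \<mu>_close: "val_ge e (\<mu> - 1)" using \<mu> by simp
  have "mat_ge 0 H" using HG assms(3,5) cong_id_integral[OF assms(4)]
    by (simp add: H_def mat_ge_integral_mult)
  have entry: "val_ge e (\<mu> * h - g)" if "val_ge 0 h" "val_ge e (h - g)" for h g
  proof -
    have "val_ge e ((\<mu> - 1) * h + (h - g))" using that \<mu>_close by (simp add: val_ge_add val_ge_mult_integral)
    moreover have "\<mu> * h - g = (\<mu> - 1) * h + (h - g)" by (simp add: algebra_simps)
    ultimately show ?thesis by (simp only:)
  qed
  show ?thesis using HG \<open>mat_ge 0 H\<close> by (simp add: G'H HG_eq mat_scale_def mat_diff_def entry)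
qed


section \<open>Automorphisms that are locally in \<open>PGL\<^sub>2(F)\<close>\<close>

lemma gl_act_mat_scale_vertex: "s \<noteq> 0 \<Longrightarrow> y \<in> vertices v \<Longrightarrow> gl_act (mat_scale s M) y = gl_act M y"
  unfolding vertices_def using gl_act_mat_scale by blast

lemma Ghat_agrees_on_std_ball:
  assumes "g \<in> Ghat v e"
  shows "\<exists>A. mat_det A \<noteq> 0 \<and> (\<forall>y\<in>vertices v. tdist v y std_vertex \<le> e \<longrightarrow> g y = gl_act A y)"
proof -
  have "adj v std_vertex (hclass (ray_lattice 1 (1, 0) (0, 1)))"
    using adj_scale_generator[of "(1, 0)" "(0, 1)"]
    by (simp add: std_vertex_def std_lattice_def ray_lattice_def vec_det_def)
  then obtain g' where "g' \<in> PGL_in_Aut v"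
    "\<forall>y\<in>vertices v. min (tdist v y std_vertex) (tdist v y (hclass (ray_lattice 1 (1, 0) (0, 1)))) \<le> e \<longrightarrow> g y = g' y"
    using assms unfolding Ghat_def by blast
  moreover obtain A where "mat_det A \<noteq> 0" "g' = pgl_aut v A"
    using \<open>g' \<in> PGL_in_Aut v\<close> unfolding PGL_in_Aut_def by blast
  ultimately show ?thesis by (intro exI[of _ A]) (auto simp: pgl_aut_def)
qed

text \<open>Representatives of \<open>g\<close> on the balls \<open>B(x\<^sub>0, e)\<close>, normalised against the one for \<open>e = 1\<close>
  so that they become integral with upper left entry \<open>1\<close>.\<close>

lemma normalised_ball_representatives:
  assumes agree: "\<And>e. 1 \<le> e \<Longrightarrow> \<exists>A. mat_det A \<noteq> 0 \<and>
      (\<forall>y\<in>vertices v. tdist v y std_vertex \<le> e \<longrightarrow> g y = gl_act A y)"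
  obtains A1 G where "mat_det A1 \<noteq> 0" "\<And>e::nat. 1 \<le> e \<Longrightarrow> fst (G e) = 1 \<and> cong_id 1 (G e)"
    "\<And>e y. 1 \<le> e \<Longrightarrow> y \<in> vertices v \<Longrightarrow> tdist v y std_vertex \<le> e \<Longrightarrow> g y = gl_act A1 (gl_act (G e) y)"
proof -
  have "\<forall>e. \<exists>A. 1 \<le> e \<longrightarrow> mat_det A \<noteq> 0 \<and>
      (\<forall>y\<in>vertices v. tdist v y std_vertex \<le> e \<longrightarrow> g y = gl_act A y)"
    using agree by blast
  from choice[OF this] obtain A where A: "\<And>e. 1 \<le> e \<Longrightarrow> mat_det (A e) \<noteq> 0"
    "\<And>e y. 1 \<le> e \<Longrightarrow> y \<in> vertices v \<Longrightarrow> tdist v y std_vertex \<le> e \<Longrightarrow> g y = gl_act (A e) y"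
    by blast
  define A1 where "A1 = A 1"
  define B where "B e = mat_mult (mat_inv A1) (A e)" for e
  define G where "G e = mat_normalise (B e)" for e
  have A1: "mat_det A1 \<noteq> 0" using A(1) by (simp add: A1_def)
  have G: "fst (B e) \<noteq> 0 \<and> fst (G e) = 1 \<and> cong_id 1 (G e)" if e: "1 \<le> e" for e
  proof -
    have "mat_det (B e) \<noteq> 0" using A(1) e A1 by (simp add: B_def mat_det_mult mat_det_inv)
    moreover have "gl_act (B e) y = y" if "y \<in> vertices v" "tdist v y std_vertex \<le> 1" for y
    proof -
      have "g y = gl_act A1 y" using A(2)[of 1 y] that by (simp add: A1_def)
      moreover have "g y = gl_act (A e) y" using A(2)[OF e that(1)] that(2) e by simp
      ultimately show ?thesis by (simp add: B_def gl_act_mult gl_act_inv_left[OF A1])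
    qed
    ultimately obtain \<mu> T where T: "\<mu> \<noteq> 0" "cong_id 1 T" "B e = mat_scale \<mu> T"
      using ball_stabiliser_cong_id[of "B e" 1] by auto
    then have "fst (B e) \<noteq> 0" using cong_id_normalise(1)[OF T(2)] by (cases T) (simp add: mat_scale_def)
    with T show ?thesis
      using cong_id_normalise[OF T(2)] by (simp add: G_def fst_mat_normalise mat_normalise_scale)
  qed
  show ?thesis
  proof (rule that[OF A1])
    show "fst (G e) = 1 \<and> cong_id 1 (G e)" if "1 \<le> e" for e using G[OF that] by simp
    fix e y assume e: "1 \<le> e" and y: "y \<in> vertices v" "tdist v y std_vertex \<le> e"
    have "gl_act (G e) y = gl_act (B e) y"
      using G[OF e] y(1) by (simp add: G_def mat_normalise_def gl_act_mat_scale_vertex)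
    then show "g y = gl_act A1 (gl_act (G e) y)"
      using A(2)[OF e y] by (simp add: B_def gl_act_mult gl_act_inv_right[OF A1])
  qed
qed

lemma normalised_representatives_cauchy:
  assumes A1: "mat_det A1 \<noteq> 0" and G: "\<And>e. 1 \<le> e \<Longrightarrow> fst (G e) = 1 \<and> cong_id 1 (G e)"
    and agree: "\<And>e y. 1 \<le> e \<Longrightarrow> y \<in> vertices v \<Longrightarrow> tdist v y std_vertex \<le> e \<Longrightarrow>
                 g y = gl_act A1 (gl_act (G e) y)"
    and e: "1 \<le> e" "e \<le> e'"
  shows "mat_ge (int e) (mat_diff (G e') (G e))"
proof -
  have dG: "mat_det (G k) \<noteq> 0" if "1 \<le> k" for k using G[OF that] cong_id_det(1)[of 1 "G k"] by simp
  define N where "N = mat_mult (mat_inv (G e)) (G e')"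
  have "mat_det N \<noteq> 0" using dG e by (simp add: N_def mat_det_mult mat_det_inv)
  moreover have "gl_act N y = y" if "y \<in> vertices v" "tdist v y std_vertex \<le> e" for y
  proof -
    have "gl_act A1 (gl_act (G e) y) = gl_act A1 (gl_act (G e') y)"
      using agree[of e y] agree[of e' y] that e by simp
    then have "gl_act (G e') y = gl_act (G e) y" by (metis gl_act_inv_left[OF A1])
    then show ?thesis using dG e by (simp add: N_def gl_act_mult gl_act_inv_left)
  qed
  ultimately obtain \<mu> T where "cong_id (int e) T" "N = mat_scale \<mu> T"
    using ball_stabiliser_cong_id[of N e] e by auto
  moreover have "G e' = mat_mult (G e) N" using dG e by (simp add: N_def mat_mult_inv_cancel)
  ultimately have G': "G e' = mat_scale \<mu> (mat_mult (G e) T)"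
    by (cases T; cases "G e") (simp add: mat_scale_def mat_mult_def algebra_simps)
  have "mat_ge 0 (G e)" using cong_id_integral[of 1 "G e"] G e by simp
  moreover have "fst (G e) = 1" "fst (G e') = 1" using G e by simp_all
  ultimately show ?thesis
    using normalised_rescaled_close[OF _ _ _ \<open>cong_id (int e) T\<close> _ G'] e by simp
qed

end

locale complete_discrete_valuation = discrete_valuation +
  assumes complete: "\<And>s::nat \<Rightarrow> 'a.
      (\<forall>N::int. \<exists>M. \<forall>m\<ge>M. \<forall>n\<ge>M. s m - s n \<in> {x. x = 0 \<or> N \<le> v x})
      \<Longrightarrow> (\<exists>l. \<forall>N::int. \<exists>M. \<forall>n\<ge>M. s n - l \<in> {x. x = 0 \<or> N \<le> v x})"
begin

lemma cauchy_limit: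
  fixes s :: "nat \<Rightarrow> 'a"
  assumes cauchy: "\<And>e e'. 1 \<le> e \<Longrightarrow> e \<le> e' \<Longrightarrow> val_ge (int e) (s e' - s e)"
  shows "\<exists>l. \<forall>e\<ge>1. val_ge (int e) (l - s e)"
proof -
  have "val_ge N (s m - s n)" if mn: "nat N + 1 \<le> m" "nat N + 1 \<le> n" for N m n
  proof (cases "n \<le> m")
    case True
    then have "val_ge (int n) (s m - s n)" using cauchy mn by simp
    moreover have "N \<le> int n" using mn by linarith
    ultimately show ?thesis by (rule val_ge_mono)
  next
    case False
    then have "val_ge (int m) (s m - s n)" using cauchy[of m n] mn val_ge_diff_commute by simp
    moreover have "N \<le> int m" using mn by linarith
    ultimately show ?thesis by (rule val_ge_mono)
  qed
  then have "\<exists>M. \<forall>m\<ge>M. \<forall>n\<ge>M. s m - s n \<in> {x. x = 0 \<or> N \<le> v x}" for N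
    by (intro exI[of _ "nat N + 1"]) (simp add: val_ge_def)
  then obtain l where "\<forall>N::int. \<exists>M. \<forall>n\<ge>M. s n - l \<in> {x. x = 0 \<or> N \<le> v x}"
    using complete by blast
  then have l: "\<forall>N::int. \<exists>M. \<forall>n\<ge>M. val_ge N (s n - l)" unfolding val_ge_def by simp
  have "val_ge (int e) (l - s e)" if e: "1 \<le> e" for e
  proof -
    obtain M where M: "\<forall>n\<ge>M. val_ge (int e) (s n - l)" using l by blast
    have "val_ge (int e) (s (max M e) - s e)" "val_ge (int e) (s (max M e) - l)"
      using cauchy e M by simp_all
    then have "val_ge (int e) ((s (max M e) - s e) - (s (max M e) - l))" by (rule val_ge_diff)
    then show ?thesis by simp
  qed
  then show ?thesis by blast
qed

lemma mat_cauchy_limit: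
  assumes "\<And>e e'. 1 \<le> e \<Longrightarrow> e \<le> e' \<Longrightarrow> mat_ge (int e) (mat_diff (S e') (S e))"
  shows "\<exists>L. \<forall>e\<ge>1. mat_ge (int e) (mat_diff L (S e))"
proof -
  note cauchy = assms[unfolded mat_ge_def mat_diff_proj prod.sel]
  obtain l1 where "\<forall>e\<ge>1. val_ge (int e) (l1 - fst (S e))"
    using cauchy_limit[of "\<lambda>e. fst (S e)"] cauchy by blast
  moreover obtain l2 where "\<forall>e\<ge>1. val_ge (int e) (l2 - fst (snd (S e)))"
    using cauchy_limit[of "\<lambda>e. fst (snd (S e))"] cauchy by blast
  moreover obtain l3 where "\<forall>e\<ge>1. val_ge (int e) (l3 - fst (snd (snd (S e))))"
    using cauchy_limit[of "\<lambda>e. fst (snd (snd (S e)))"] cauchy by blast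
  moreover obtain l4 where "\<forall>e\<ge>1. val_ge (int e) (l4 - snd (snd (snd (S e))))"
    using cauchy_limit[of "\<lambda>e. snd (snd (snd (S e)))"] cauchy by blast
  ultimately show ?thesis by (intro exI[of _ "(l1, l2, l3, l4)"]) (simp add: mat_diff_proj)
qed

lemma agrees_on_balls_imp_PGL:
  assumes g: "g \<in> tree_aut v"
    and agree: "\<And>e. 1 \<le> e \<Longrightarrow> \<exists>A. mat_det A \<noteq> 0 \<and>
                 (\<forall>y\<in>vertices v. tdist v y std_vertex \<le> e \<longrightarrow> g y = gl_act A y)"
  shows "g \<in> PGL_in_Aut v"
proof -
  obtain A1 G where A1: "mat_det A1 \<noteq> 0" and G: "\<And>e::nat. 1 \<le> e \<Longrightarrow> fst (G e) = 1 \<and> cong_id 1 (G e)"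
    and gG: "\<And>e y. 1 \<le> e \<Longrightarrow> y \<in> vertices v \<Longrightarrow> tdist v y std_vertex \<le> e \<Longrightarrow>
              g y = gl_act A1 (gl_act (G e) y)"
    using normalised_ball_representatives[OF agree] by blast
  have "\<exists>L. \<forall>e\<ge>1. mat_ge (int e) (mat_diff L (G e))"
    by (rule mat_cauchy_limit) (rule normalised_representatives_cauchy[OF A1 G gG])
  then obtain L where L: "\<And>e. 1 \<le> e \<Longrightarrow> mat_ge (int e) (mat_diff L (G e))" by blast
  have close: "cong_id (int e) (mat_mult (mat_inv (G e)) L)" if "1 \<le> e" for e
    using cong_id_inv_mult_of_close G[OF that] L[OF that] by simp
  have dG: "mat_det (G e) \<noteq> 0" if "1 \<le> e" for e using G[OF that] cong_id_det(1)[of 1] by simp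
  have "mat_det L \<noteq> 0"
    using cong_id_det(1)[OF close[of 1]] by (simp add: mat_det_mult)
  have "g y = gl_act (mat_mult A1 L) y" if y: "y \<in> vertices v" for y
  proof -
    obtain u w where uw: "vec_det u w \<noteq> 0" "y = hclass (ospan u w)" using y vertices_iff_ospan by blast
    obtain m where m: "\<And>e T. m \<le> e \<Longrightarrow> cong_id (int e) T \<Longrightarrow> mat_apply T ` ospan u w = ospan u w"
      using cong_id_stabilises_ospan[OF uw(1)] by blast
    define e where "e = max (max (tdist v y std_vertex) m) 1"
    have e: "1 \<le> e" "m \<le> e" "tdist v y std_vertex \<le> e" by (auto simp: e_def)
    have "gl_act (mat_mult (mat_inv (G e)) L) y = y"
      using m[OF e(2) close[OF e(1)]] uw(2) by (simp add: gl_act_hclass)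
    then have "gl_act (mat_inv (G e)) (gl_act L y) = y" by (simp add: gl_act_mult)
    then have "gl_act L y = gl_act (G e) y"
      using gl_act_inv_right[OF dG[OF e(1)], of "gl_act L y"] by simp
    then show ?thesis using gG[OF e(1) y e(3)] by (simp add: gl_act_mult)
  qed
  moreover have "g x = x" if "x \<notin> vertices v" for x using g that by (simp add: tree_aut_def)
  ultimately have "g = pgl_aut v (mat_mult A1 L)" unfolding pgl_aut_def by (intro ext) auto
  moreover have "mat_det (mat_mult A1 L) \<noteq> 0" using A1 \<open>mat_det L \<noteq> 0\<close> by (simp add: mat_det_mult)
  ultimately show ?thesis unfolding PGL_in_Aut_def by blast
qed

lemma Inter_Ghat_eq_PGL_in_Aut: "(\<Inter>e\<in>{e. 1 \<le> e}. Ghat v e) = PGL_in_Aut v"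
proof
  show "(\<Inter>e\<in>{e. 1 \<le> e}. Ghat v e) \<subseteq> PGL_in_Aut v"
  proof
    fix g assume g: "g \<in> (\<Inter>e\<in>{e. 1 \<le> e}. Ghat v e)"
    then have "g \<in> tree_aut v" unfolding Ghat_def by auto
    moreover have "\<exists>A. mat_det A \<noteq> 0 \<and> (\<forall>y\<in>vertices v. tdist v y std_vertex \<le> e \<longrightarrow> g y = gl_act A y)"
      if "1 \<le> e" for e
      using g that Ghat_agrees_on_std_ball by blast
    ultimately show "g \<in> PGL_in_Aut v" by (rule agrees_on_balls_imp_PGL)
  qed
  show "PGL_in_Aut v \<subseteq> (\<Inter>e\<in>{e. 1 \<le> e}. Ghat v e)"
    using PGL_in_Aut_subset_Ghat by blast
qed

end

lemma Ghat_subset_tree_aut: "Ghat v e \<subseteq> tree_aut v"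
  unfolding Ghat_def by blast

lemma Ghat_antimono: "e \<le> e' \<Longrightarrow> Ghat v e' \<subseteq> Ghat v e"
  unfolding Ghat_def by (fastforce intro: order_trans)

lemma complete_discrete_valuation_if_nonarch_local_field:
  assumes "nonarch_local_field v"
  obtains \<pi> where "complete_discrete_valuation v \<pi>"
proof -
  obtain \<pi> where "\<pi> \<noteq> 0" "v \<pi> = 1" using assms unfolding nonarch_local_field_def by blast
  with assms have "complete_discrete_valuation v \<pi>"
    unfolding nonarch_local_field_def complete_discrete_valuation_def discrete_valuation_def
      complete_discrete_valuation_axioms_def by blast
  then show ?thesis by (rule that)
qed

theorem mainTheorem4:
  fixes v :: "'a::field \<Rightarrow> int"
  assumes "nonarch_local_field v"
  shows "(\<Inter>e\<in>{e::nat. 1 \<le> e}. Ghat v e) = PGL_in_Aut v \<and>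
         (\<forall>e::nat. 1 \<le> e \<longrightarrow>
            PGL_in_Aut v \<subseteq> Ghat v (e + 1) \<and> Ghat v (e + 1) \<subseteq> Ghat v e \<and> Ghat v e \<subseteq> tree_aut v)"
proof -
  obtain \<pi> where "complete_discrete_valuation v \<pi>"
    using assms by (rule complete_discrete_valuation_if_nonarch_local_field)
  then interpret complete_discrete_valuation v \<pi> .
  show ?thesis
  proof (intro conjI allI impI)
    show "(\<Inter>e\<in>{e::nat. 1 \<le> e}. Ghat v e) = PGL_in_Aut v" by (rule Inter_Ghat_eq_PGL_in_Aut)
    fix e :: nat
    show "PGL_in_Aut v \<subseteq> Ghat v (e + 1)" by (rule PGL_in_Aut_subset_Ghat)
    show "Ghat v (e + 1) \<subseteq> Ghat v e" by (rule Ghat_antimono) simp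
    show "Ghat v e \<subseteq> tree_aut v" by (rule Ghat_subset_tree_aut)
  qed
qed

end
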